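(* Let $\mathbb{K}$ be a positive commutative monoid, and let $H_0$ and $H_1$ be hypergraphs such that $H_0$ is obtained from $H_1$ by a sequence of safe-deletion operations. Then for every collection $D_0$ of $\mathbb{K}$-relations over $H_0$ there exists a collection $D_1$ of $\mathbb{K}$-relations over $H_1$ such that, for every integer $k\ge1$, $D_0$ is $k$-wise consistent if and only if $D_1$ is $k$-wise consistent.
   Context: A commutative monoid $\mathbb{K}=(K,+,0)$ is positive if $p+q=0$ implies $p=q=0$. Attributes have domains; for a finite attribute set $X$, an $X$-tuple assigns each $A\in X$ a value in its domain; $t[Y]$ is restriction. A $\mathbb{K}$-relation over $X$ is a finitely supported function $R$ from $X$-tuples to $K$ (support $R'=\{t:R(t)\ne0\}$); marginals are $R[Y](t)=\sum_{r\in R',r[Y]=t}R(r)$ for $Y\subseteq X$. A collection of $\mathbb{K}$-relations over a hypergraph $H$ with hyperedges $X_1,\dots,X_m$ (vertices viewed as attributes) is a collection $R_1(X_1),\dots,R_m(X_m)$; it is $k$-wise consistent if for every $q\le k$ and $i_1,\dots,i_q\in[m]$ there is a $\mathbb{K}$-relation $W$ over $X_{i_1}\cup\dots\cup X_{i_q}$ with $W[X_{i_j}]=R_{i_j}$ for all $j$. For a hypergraph $H=(V,E)$ and $W\subseteq V$, the induced hypergraph $H[W]$ has vertex set $W$ and hyperedges the non-empty sets $X\cap W$ for $X\in E$. A vertex-deletion replaces $H$ by $H[V\setminus\{u\}]$ for some $u\in V$; a covered-edge-deletion replaces $H$ by $(V,E\setminus\{e\})$ for some $e\in E$ with $e\subseteq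 f$ for some $f\in E\setminus\{e\}$. Both are safe-deletion operations. *)

theory Defs
  imports Main
begin

text \<open>Attributes have type 'a, attribute values type 'v (the domain of every
attribute is the value type). An X-tuple is a partial map with domain exactly X;
restriction t[Y] is map restriction.\<close>

definition positive_monoid :: "'k::comm_monoid_add itself \<Rightarrow> bool" where
  "positive_monoid _ \<longleftrightarrow> (\<forall>p q :: 'k. p + q = 0 \<longrightarrow> p = 0 \<and> q = 0)"

definition krel :: "'a set \<Rightarrow> (('a \<rightharpoonup> 'v) \<Rightarrow> 'k::comm_monoid_add) \<Rightarrow> bool" where
  "krel X R \<longleftrightarrow> finite {t. R t \<noteq> 0} \<and> (\<forall>t. R t \<noteq> 0 \<longrightarrow> dom t = X)"

definition marg :: "(('a \<rightharpoonup> 'v) \<Rightarrow> 'k::comm_monoid_add) \<Rightarrow> 'a set \<Rightarrow> ('a \<rightharpoonup> 'v) \<Rightarrow> 'k" where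
  "marg R Y t = (\<Sum>r \<in> {r. R r \<noteq> 0 \<and> r |` Y = t}. R r)"

definition hypergraph :: "'a set \<Rightarrow> 'a set set \<Rightarrow> bool" where
  "hypergraph V E \<longleftrightarrow> finite V \<and> (\<forall>X\<in>E. X \<subseteq> V \<and> X \<noteq> {})"

definition collection_over :: "'a set set \<Rightarrow> ('a set \<Rightarrow> ('a \<rightharpoonup> 'v) \<Rightarrow> 'k::comm_monoid_add) \<Rightarrow> bool" where
  "collection_over E D \<longleftrightarrow> (\<forall>X\<in>E. krel X (D X))"

text \<open>k-wise consistency: every choice of at most k hyperedges (repetitions are
irrelevant, so we range over sets of at most k hyperedges) admits a witness.\<close>
definition kwise_consistent :: "nat \<Rightarrow> 'a set set \<Rightarrow> ('a set \<Rightarrow> ('a \<rightharpoonup> 'v) \<Rightarrow> 'k::comm_monoid_add) \<Rightarrow> bool" where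
  "kwise_consistent k E D \<longleftrightarrow>
     (\<forall>F. F \<subseteq> E \<longrightarrow> card F \<le> k \<longrightarrow>
        (\<exists>W. krel (\<Union>F) W \<and> (\<forall>X\<in>F. marg W X = D X)))"

definition induced :: "'a set set \<Rightarrow> 'a set \<Rightarrow> 'a set set" where
  "induced E W = {X \<inter> W | X. X \<in> E \<and> X \<inter> W \<noteq> {}}"

definition safe_deletion :: "('a set \<times> 'a set set) \<Rightarrow> ('a set \<times> 'a set set) \<Rightarrow> bool" where
  "safe_deletion H H' \<longleftrightarrow>
     (\<exists>u \<in> fst H. H' = (fst H - {u}, induced (snd H) (fst H - {u})))
   \<or> (\<exists>e \<in> snd H. (\<exists>f \<in> snd H - {e}. e \<subseteq> f) \<and> H' = (fst H, snd H - {e}))"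

end

theory Submission
  imports Defs
begin

(*
  The deletions are undone one at a time, from the end of the sequence backwards.

  Re-adding a covered edge e \<subseteq> f, give e the marginal of the relation on f: a witness
  for a family containing e is the marginal of a witness for the family with e replaced by f.

  Re-adding a vertex u, pad every tuple with one fixed value at u. Witnesses are padded in
  the same way, and marginalising u away recovers the old relations. An edge {u} shrinks to
  the empty edge, which receives the total mass of an arbitrary relation; this is harmless,
  since the empty edge only meets another edge in families of size at least 2, and 2-wise
  consistency forces all relations to have the same total mass.
*)

lemma marg_neq_zeroE:
  assumes "marg W Y t \<noteq> 0"
  obtains r where "W r \<noteq> 0" "r |` Y = t"
proof -
  have "{r. W r \<noteq> 0 \<and> r |` Y = t} \<noteq> {}"
    using assms unfolding marg_def by force
  then show thesis using that by blast
qed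

lemma restrict_map_dom: "r |` dom r = r"
  by (simp add: restrict_map_def fun_eq_iff domIff)

lemma marg_marg:
  assumes fin: "finite {r. W r \<noteq> 0}" and "B \<subseteq> A"
  shows "marg (marg W A) B = marg W B"
proof
  fix t
  let ?S = "{r. W r \<noteq> 0 \<and> r |` B = t}"
  let ?T = "(\<lambda>r. r |` A) ` ?S"
  have AB: "A \<inter> B = B" using \<open>B \<subseteq> A\<close> by blast
  have restrict_B: "r |` B = s |` B" if "r |` A = s" for r s
    using arg_cong[OF that, of "\<lambda>s. s |` B"] by (simp add: AB)
  have "marg (marg W A) B t = (\<Sum>s\<in>?T. marg W A s)"
    unfolding marg_def[of "marg W A"]
  proof (rule sum.mono_neutral_left)
    show "finite ?T" using fin by simp
    show "{s. marg W A s \<noteq> 0 \<and> s |` B = t} \<subseteq> ?T"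
    proof
      fix s assume s: "s \<in> {s. marg W A s \<noteq> 0 \<and> s |` B = t}"
      then obtain r where "W r \<noteq> 0" "r |` A = s" by (blast elim: marg_neq_zeroE)
      with s show "s \<in> ?T" using restrict_B by blast
    qed
  qed (auto simp: AB)
  also have "\<dots> = (\<Sum>s\<in>?T. \<Sum>r\<in>{r \<in> ?S. r |` A = s}. W r)"
    unfolding marg_def
    by (intro sum.cong refl arg_cong[where f = "sum W"]) (auto simp: AB dest: restrict_B)
  also have "\<dots> = marg W B t"
    unfolding marg_def using fin by (intro sum.group) auto
  finally show "marg (marg W A) B t = marg W B t" .
qed

lemma marg_self:
  assumes "krel X R"
  shows "marg R X = R"
proof
  fix t
  have "{r. R r \<noteq> 0 \<and> r |` X = t} = (if R t = 0 then {} else {t})"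
    using assms by (auto simp: krel_def restrict_map_dom)
  then show "marg R X t = R t" by (simp add: marg_def)
qed

lemma krel_marg:
  assumes "krel B W" and "A \<subseteq> B"
  shows "krel A (marg W A)"
proof -
  have "{t. marg W A t \<noteq> 0} \<subseteq> (\<lambda>r. r |` A) ` {r. W r \<noteq> 0}"
    by (auto elim!: marg_neq_zeroE)
  moreover have "dom t = A" if "marg W A t \<noteq> 0" for t
  proof -
    obtain r where "W r \<noteq> 0" "r |` A = t"
      by (rule marg_neq_zeroE[OF \<open>marg W A t \<noteq> 0\<close>])
    moreover from this have "dom r = B"
      using assms(1) unfolding krel_def by blast
    ultimately show ?thesis using assms(2) by (metis Int_absorb1 dom_restrict)
  qed
  ultimately show ?thesis
    using assms(1) unfolding krel_def by (meson finite_imageI finite_subset)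
qed

lemma krel_marg_empty: "krel {} (marg R {})"
proof -
  have "{t. marg R {} t \<noteq> 0} \<subseteq> {Map.empty}"
    by (auto elim!: marg_neq_zeroE)
  then show ?thesis
    unfolding krel_def by (auto elim!: marg_neq_zeroE intro: finite_subset)
qed

definition extend_const ::
  "'a set \<Rightarrow> 'a \<Rightarrow> 'v \<Rightarrow> (('a \<rightharpoonup> 'v) \<Rightarrow> 'k::zero) \<Rightarrow> ('a \<rightharpoonup> 'v) \<Rightarrow> 'k" where
  "extend_const X u c R t =
     (if u \<notin> X then R t else if t u = Some c then R (t(u := None)) else 0)"

lemma extend_const_not_mem [simp]: "u \<notin> X \<Longrightarrow> extend_const X u c R = R"
  by (simp add: extend_const_def fun_eq_iff)

lemma krel_extend_const:
  assumes "krel (X - {u}) R"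
  shows "krel X (extend_const X u c R)"
proof (cases "u \<in> X")
  case True
  have "{t. extend_const X u c R t \<noteq> 0} \<subseteq> (\<lambda>s. s(u \<mapsto> c)) ` {s. R s \<noteq> 0}"
  proof
    fix t assume "t \<in> {t. extend_const X u c R t \<noteq> 0}"
    then have "t u = Some c" "R (t(u := None)) \<noteq> 0"
      using True by (auto simp: extend_const_def split: if_splits)
    then show "t \<in> (\<lambda>s. s(u \<mapsto> c)) ` {s. R s \<noteq> 0}"
      by (intro image_eqI[of _ _ "t(u := None)"]) (auto simp: fun_eq_iff)
  qed
  moreover have "dom t = X" if "extend_const X u c R t \<noteq> 0" for t
  proof -
    have "t u = Some c" "R (t(u := None)) \<noteq> 0"
      using that True by (auto simp: extend_const_def split: if_splits)
    moreover have "dom (t(u := None)) = X - {u}"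
      using assms calculation(2) unfolding krel_def by blast
    ultimately show ?thesis using True by auto
  qed
  ultimately show ?thesis
    using assms unfolding krel_def by (meson finite_imageI finite_subset)
qed (use assms in simp)

lemma marg_extend_const_sum:
  assumes "krel (X - {u}) R" and "u \<in> X"
  shows "marg (extend_const X u c R) Y t = (\<Sum>s\<in>{s. R s \<noteq> 0 \<and> s(u \<mapsto> c) |` Y = t}. R s)"
  unfolding marg_def
proof (rule sum.reindex_bij_witness[where i = "\<lambda>s. s(u \<mapsto> c)" and j = "\<lambda>r. r(u := None)"])
  fix r assume "r \<in> {r. extend_const X u c R r \<noteq> 0 \<and> r |` Y = t}"
  then have r: "r u = Some c" "R (r(u := None)) \<noteq> 0" "r |` Y = t"
    using \<open>u \<in> X\<close> by (auto simp: extend_const_def split: if_splits)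
  then show r_eq: "(r(u := None))(u \<mapsto> c) = r" by (auto simp: fun_eq_iff)
  show "r(u := None) \<in> {s. R s \<noteq> 0 \<and> s(u \<mapsto> c) |` Y = t}"
    using r by (simp only: mem_Collect_eq r_eq) simp
  show "R (r(u := None)) = extend_const X u c R r"
    using r \<open>u \<in> X\<close> by (simp add: extend_const_def)
next
  fix s assume s: "s \<in> {s. R s \<noteq> 0 \<and> s(u \<mapsto> c) |` Y = t}"
  then have "s u = None" using assms(1) by (auto simp: krel_def)
  then show "(s(u \<mapsto> c))(u := None) = s" by (auto simp: fun_eq_iff)
  then show "s(u \<mapsto> c) \<in> {r. extend_const X u c R r \<noteq> 0 \<and> r |` Y = t}"
    using s \<open>u \<in> X\<close> by (simp add: extend_const_def)
qed

lemma marg_extend_const: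
  assumes R: "krel (X - {u}) R" and "Y \<subseteq> X"
  shows "marg (extend_const X u c R) Y = extend_const Y u c (marg R (Y - {u}))"
proof (cases "u \<in> X")
  case uX: True
  show ?thesis
  proof
    fix t
    have "s u = None" if "R s \<noteq> 0" for s
      using that R by (auto simp: krel_def)
    then have "{s. R s \<noteq> 0 \<and> s(u \<mapsto> c) |` Y = t} =
      (if u \<notin> Y then {s. R s \<noteq> 0 \<and> s |` Y = t}
       else if t u = Some c then {s. R s \<noteq> 0 \<and> s |` (Y - {u}) = t(u := None)} else {})"
      by (auto simp: fun_eq_iff restrict_map_def)
    then show "marg (extend_const X u c R) Y t = extend_const Y u c (marg R (Y - {u})) t"
      using marg_extend_const_sum[OF R uX] by (simp add: extend_const_def marg_def)
  qed
next
  case False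
  then have "u \<notin> Y" "Y - {u} = Y" using \<open>Y \<subseteq> X\<close> by auto
  with False show ?thesis by simp
qed

definition globally_consistent ::
  "'a set set \<Rightarrow> ('a set \<Rightarrow> ('a \<rightharpoonup> 'v) \<Rightarrow> 'k::comm_monoid_add) \<Rightarrow> bool" where
  "globally_consistent F D \<longleftrightarrow> (\<exists>W. krel (\<Union>F) W \<and> (\<forall>X\<in>F. marg W X = D X))"

lemma kwise_consistent_iff:
  "kwise_consistent k E D \<longleftrightarrow> (\<forall>F\<subseteq>E. card F \<le> k \<longrightarrow> globally_consistent F D)"
  by (simp add: kwise_consistent_def globally_consistent_def)

lemma globally_consistent_cong:
  "(\<And>X. X \<in> F \<Longrightarrow> D X = D' X) \<Longrightarrow> globally_consistent F D \<longleftrightarrow> globally_consistent F D'"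
  by (simp add: globally_consistent_def)

lemma globally_consistent_singleton: "krel X (D X) \<Longrightarrow> globally_consistent {X} D"
  unfolding globally_consistent_def by (intro exI[of _ "D X"]) (simp add: marg_self)

lemma globally_consistent_covered:
  assumes "globally_consistent G D"
    and cover: "\<And>X. X \<in> F \<Longrightarrow> \<exists>Y\<in>G. X \<subseteq> Y \<and> D' X = marg (D Y) X"
  shows "globally_consistent F D'"
proof -
  obtain W where W: "krel (\<Union>G) W" "\<And>Y. Y \<in> G \<Longrightarrow> marg W Y = D Y"
    using assms(1) unfolding globally_consistent_def by blast
  have fin: "finite {r. W r \<noteq> 0}" using W(1) by (simp add: krel_def)
  have "\<Union>F \<subseteq> \<Union>G" using cover by blast
  with W(1) have "krel (\<Union>F) (marg W (\<Union>F))" by (rule krel_marg)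
  moreover have "marg (marg W (\<Union>F)) X = D' X" if X: "X \<in> F" for X
  proof -
    obtain Y where "Y \<in> G" "X \<subseteq> Y" "D' X = marg (D Y) X" using cover[OF X] by blast
    moreover have "marg (marg W (\<Union>F)) X = marg W X"
      using X by (intro marg_marg[OF fin]) blast
    ultimately show ?thesis using W(2) marg_marg[OF fin] by metis
  qed
  ultimately show ?thesis unfolding globally_consistent_def by blast
qed

lemma globally_consistent_insert_empty:
  assumes "globally_consistent F D" "Y \<in> F" "D {} = marg (D Y) {}"
  shows "globally_consistent (insert {} F) D"
proof -
  obtain W where W: "krel (\<Union>F) W" "\<And>X. X \<in> F \<Longrightarrow> marg W X = D X"
    using assms(1) unfolding globally_consistent_def by blast
  have "finite {r. W r \<noteq> 0}" using W(1) by (simp add: krel_def)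
  then have "marg W {} = D {}"
    using marg_marg[of W "{}" Y] W(2)[OF assms(2)] assms(3) by simp
  with W show ?thesis unfolding globally_consistent_def by auto
qed

lemma globally_consistent_extend_const:
  assumes "globally_consistent ((\<lambda>X. X - {u}) ` F) D"
  shows "globally_consistent F (\<lambda>X. extend_const X u c (D (X - {u})))"
proof -
  obtain W where W: "krel (\<Union>F - {u}) W" "\<And>X. X \<in> F \<Longrightarrow> marg W (X - {u}) = D (X - {u})"
    using assms unfolding globally_consistent_def by auto
  have "marg (extend_const (\<Union>F) u c W) X = extend_const X u c (D (X - {u}))" if "X \<in> F" for X
    using that W by (subst marg_extend_const) auto
  then show ?thesis
    unfolding globally_consistent_def using krel_extend_const[OF W(1)] by blast
qed

lemma kwise_consistent_subset:
  assumes "kwise_consistent k E D" "E' \<subseteq> E" "\<And>X. X \<in> E' \<Longrightarrow> D X = D' X"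
  shows "kwise_consistent k E' D'"
  unfolding kwise_consistent_iff
proof (intro allI impI)
  fix F assume "F \<subseteq> E'" "card F \<le> k"
  with assms(1,2) have "globally_consistent F D"
    unfolding kwise_consistent_iff by blast
  moreover have "globally_consistent F D \<longleftrightarrow> globally_consistent F D'"
    using \<open>F \<subseteq> E'\<close> assms(3) by (intro globally_consistent_cong) blast
  ultimately show "globally_consistent F D'" by simp
qed

lemma kwise_consistent_total_mass:
  assumes "kwise_consistent k E D" "2 \<le> k" "X \<in> E" "Y \<in> E"
  shows "marg (D X) {} = marg (D Y) {}"
proof -
  have "card {X, Y} \<le> k" using assms(2) by (simp add: card_insert_if)
  moreover have "{X, Y} \<subseteq> E" using assms(3,4) by simp
  ultimately have "globally_consistent {X, Y} D"
    using assms(1) unfolding kwise_consistent_iff by simp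
  then obtain W where W: "krel (X \<union> Y) W" "marg W X = D X" "marg W Y = D Y"
    unfolding globally_consistent_def by auto
  have "finite {r. W r \<noteq> 0}" using W(1) by (simp add: krel_def)
  then show ?thesis by (simp flip: W(2,3) add: marg_marg)
qed

lemma kwise_consistent_add_covered_edge:
  assumes "finite E" "e \<in> E" "f \<in> E" "f \<noteq> e" "e \<subseteq> f"
    and D: "collection_over (E - {e}) D"
  shows "kwise_consistent k E (D(e := marg (D f) e)) \<longleftrightarrow> kwise_consistent k (E - {e}) D"
    (is "kwise_consistent k E ?D' \<longleftrightarrow> _")
proof
  assume "kwise_consistent k E ?D'"
  then show "kwise_consistent k (E - {e}) D" by (rule kwise_consistent_subset) auto
next
  assume cons: "kwise_consistent k (E - {e}) D"
  show "kwise_consistent k E ?D'"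
    unfolding kwise_consistent_iff
  proof (intro allI impI)
    fix F assume F: "F \<subseteq> E" "card F \<le> k"
    let ?G = "(\<lambda>X. if X = e then f else X) ` F"
    have "card ?G \<le> k"
      using le_trans[OF card_image_le[OF finite_subset[OF F(1) \<open>finite E\<close>]] F(2)] .
    moreover have "?G \<subseteq> E - {e}" using F(1) assms(3,4) by auto
    ultimately have "globally_consistent ?G D"
      using cons unfolding kwise_consistent_iff by blast
    then show "globally_consistent F ?D'"
    proof (rule globally_consistent_covered)
      fix X assume "X \<in> F"
      show "\<exists>Y\<in>?G. X \<subseteq> Y \<and> ?D' X = marg (D Y) X"
      proof (cases "X = e")
        case False
        then have "krel X (D X)" using \<open>X \<in> F\<close> F(1) D by (auto simp: collection_over_def)
        then show ?thesis using \<open>X \<in> F\<close> False by (intro bexI[of _ X]) (auto simp: marg_self)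
      qed (use \<open>X \<in> F\<close> \<open>e \<subseteq> f\<close> in auto)
    qed
  qed
qed

lemma kwise_consistent_add_empty_edge:
  assumes "finite E" and D: "collection_over (E - {{}}) D"
  defines "D' \<equiv> D({} := marg (D (SOME X. X \<in> E - {{}})) {})"
  shows "kwise_consistent k E D' \<longleftrightarrow> kwise_consistent k (E - {{}}) D"
proof
  assume "kwise_consistent k E D'"
  then show "kwise_consistent k (E - {{}}) D"
    by (rule kwise_consistent_subset) (auto simp: D'_def)
next
  assume cons: "kwise_consistent k (E - {{}}) D"
  then have cons': "kwise_consistent k (E - {{}}) D'"
    by (rule kwise_consistent_subset) (auto simp: D'_def)
  show "kwise_consistent k E D'"
    unfolding kwise_consistent_iff
  proof (intro allI impI)
    fix F assume F: "F \<subseteq> E" "card F \<le> k"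
    have "F - {{}} \<subseteq> E - {{}}" using F(1) by blast
    moreover have "card (F - {{}}) \<le> k" using F(2) card_Diff1_le[of F "{}"] by linarith
    ultimately have consF: "globally_consistent (F - {{}}) D'"
      using cons' unfolding kwise_consistent_iff by blast
    consider "{} \<notin> F" | "F = {{}}" | Y where "{} \<in> F" "Y \<in> F" "Y \<noteq> {}" by auto
    then show "globally_consistent F D'"
    proof cases
      case 1
      then show ?thesis using consF by simp
    next
      case 2
      then show ?thesis by (simp add: globally_consistent_singleton D'_def krel_marg_empty)
    next
      case (3 Y)
      have "card {{}, Y} \<le> card F"
        using 3 finite_subset[OF F(1) \<open>finite E\<close>] by (intro card_mono) auto
      with F(2) \<open>Y \<noteq> {}\<close> have "2 \<le> k" by simp
      have Y: "Y \<in> E - {{}}" using 3 F(1) by blast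
      then have "(SOME X. X \<in> E - {{}}) \<in> E - {{}}" by (rule someI)
      from kwise_consistent_total_mass[OF cons \<open>2 \<le> k\<close> Y this]
      have "D' {} = marg (D' Y) {}" using \<open>Y \<noteq> {}\<close> by (simp add: D'_def)
      moreover have "Y \<in> F - {{}}" using 3 by blast
      ultimately have "globally_consistent (insert {} (F - {{}})) D'"
        using consF by (intro globally_consistent_insert_empty)
      then show ?thesis by (simp only: insert_Diff[OF \<open>{} \<in> F\<close>])
    qed
  qed
qed

lemma kwise_consistent_extend_const:
  assumes "finite E" and D: "collection_over ((\<lambda>X. X - {u}) ` E) D"
  shows "kwise_consistent k E (\<lambda>X. extend_const X u c (D (X - {u})))
     \<longleftrightarrow> kwise_consistent k ((\<lambda>X. X - {u}) ` E) D"
    (is "kwise_consistent k E ?D' \<longleftrightarrow> kwise_consistent k ?E' D")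
proof
  assume cons: "kwise_consistent k E ?D'"
  show "kwise_consistent k ?E' D"
    unfolding kwise_consistent_iff
  proof (intro allI impI)
    fix G assume "G \<subseteq> ?E'" "card G \<le> k"
    then obtain F where F: "F \<subseteq> E" "inj_on (\<lambda>X. X - {u}) F" "G = (\<lambda>X. X - {u}) ` F"
      by (auto simp: subset_image_inj)
    with \<open>card G \<le> k\<close> have "card F \<le> k" by (simp add: card_image)
    with F(1) have "globally_consistent F ?D'"
      using cons unfolding kwise_consistent_iff by blast
    then show "globally_consistent G D"
    proof (rule globally_consistent_covered)
      fix Y assume "Y \<in> G"
      then obtain X where "X \<in> F" and Y: "Y = X - {u}" using F(3) by blast
      have "krel (X - {u}) (D (X - {u}))"
        using \<open>X \<in> F\<close> F(1) D by (auto simp: collection_over_def)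
      then have "marg (?D' X) (X - {u}) = D (X - {u})"
        by (simp add: marg_extend_const marg_self)
      then show "\<exists>X\<in>F. Y \<subseteq> X \<and> D Y = marg (?D' X) Y"
        unfolding Y using \<open>X \<in> F\<close> by auto
    qed
  qed
next
  assume cons: "kwise_consistent k ?E' D"
  show "kwise_consistent k E ?D'"
    unfolding kwise_consistent_iff
  proof (intro allI impI)
    fix F assume F: "F \<subseteq> E" "card F \<le> k"
    have "card ((\<lambda>X. X - {u}) ` F) \<le> k"
      using le_trans[OF card_image_le[OF finite_subset[OF F(1) \<open>finite E\<close>]] F(2)] .
    moreover have "(\<lambda>X. X - {u}) ` F \<subseteq> ?E'" using F(1) by blast
    ultimately have "globally_consistent ((\<lambda>X. X - {u}) ` F) D"
      using cons unfolding kwise_consistent_iff by blast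
    then show "globally_consistent F ?D'" by (rule globally_consistent_extend_const)
  qed
qed

definition equiconsistent ::
  "'a set set \<Rightarrow> ('a set \<Rightarrow> ('a \<rightharpoonup> 'v) \<Rightarrow> 'k::comm_monoid_add) \<Rightarrow>
   'a set set \<Rightarrow> ('a set \<Rightarrow> ('a \<rightharpoonup> 'v) \<Rightarrow> 'k) \<Rightarrow> bool" where
  "equiconsistent E D E' D' \<longleftrightarrow> (\<forall>k. kwise_consistent k E D \<longleftrightarrow> kwise_consistent k E' D')"

lemma hypergraph_finite_edges: "hypergraph V E \<Longrightarrow> finite E"
  unfolding hypergraph_def by (meson PowI finite_Pow_iff finite_subset subsetI)

lemma induced_delete_vertex:
  assumes "hypergraph V E"
  shows "induced E (V - {u}) = (\<lambda>X. X - {u}) ` E - {{}}"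
proof -
  have "induced E (V - {u}) = (\<lambda>X. X \<inter> (V - {u})) ` E - {{}}"
    unfolding induced_def by blast
  also have "(\<lambda>X. X \<inter> (V - {u})) ` E = (\<lambda>X. X - {u}) ` E"
    using assms unfolding hypergraph_def by (intro image_cong) auto
  finally show ?thesis .
qed

lemma vertex_deletion_reflects_consistency:
  assumes "hypergraph V E" and D: "collection_over (induced E (V - {u})) D"
  shows "\<exists>D'. collection_over E D' \<and> equiconsistent E D' (induced E (V - {u})) D"
proof -
  let ?E' = "(\<lambda>X. X - {u}) ` E"
  have finE: "finite E" using assms(1) by (rule hypergraph_finite_edges)
  have induced: "induced E (V - {u}) = ?E' - {{}}"
    using assms(1) by (rule induced_delete_vertex)
  define D0 where "D0 = D({} := marg (D (SOME X. X \<in> ?E' - {{}})) {})"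
  have D0: "collection_over ?E' D0"
    unfolding collection_over_def
  proof
    fix Y assume "Y \<in> ?E'"
    with D show "krel Y (D0 Y)"
      unfolding D0_def collection_over_def induced
      by (cases "Y = {}") (simp_all add: krel_marg_empty)
  qed
  define D' where "D' X = extend_const X u undefined (D0 (X - {u}))" for X
  have "collection_over E D'"
    using D0 unfolding D'_def collection_over_def by (auto intro: krel_extend_const)
  moreover have "kwise_consistent k E D' \<longleftrightarrow> kwise_consistent k (induced E (V - {u})) D" for k
  proof -
    have "kwise_consistent k E D' \<longleftrightarrow> kwise_consistent k ?E' D0"
      unfolding D'_def using finE D0 by (rule kwise_consistent_extend_const)
    also have "\<dots> \<longleftrightarrow> kwise_consistent k (?E' - {{}}) D"
      unfolding D0_def using finE D[unfolded induced]
      by (intro kwise_consistent_add_empty_edge) auto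
    finally show ?thesis unfolding induced .
  qed
  ultimately show ?thesis unfolding equiconsistent_def by blast
qed

lemma covered_edge_deletion_reflects_consistency:
  assumes "hypergraph V E" "e \<in> E" "f \<in> E - {e}" "e \<subseteq> f"
    and D: "collection_over (E - {e}) D"
  shows "\<exists>D'. collection_over E D' \<and> equiconsistent E D' (E - {e}) D"
proof (intro exI conjI)
  have "krel f (D f)" using D \<open>f \<in> E - {e}\<close> by (simp add: collection_over_def)
  then show "collection_over E (D(e := marg (D f) e))"
    using D \<open>e \<subseteq> f\<close> by (auto simp: collection_over_def intro: krel_marg)
  show "equiconsistent E (D(e := marg (D f) e)) (E - {e}) D"
    unfolding equiconsistent_def
    using kwise_consistent_add_covered_edge[OF hypergraph_finite_edges[OF assms(1)] assms(2)
        _ _ assms(4) D] assms(3)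
    by simp
qed

lemma hypergraph_safe_deletion:
  "hypergraph V E \<Longrightarrow> safe_deletion (V, E) (V', E') \<Longrightarrow> hypergraph V' E'"
  by (auto simp: safe_deletion_def hypergraph_def induced_def)

lemma safe_deletion_reflects_consistency:
  assumes "hypergraph V E" "safe_deletion (V, E) (V', E')" and D: "collection_over E' D"
  shows "\<exists>D'. collection_over E D' \<and> equiconsistent E D' E' D"
  using assms(2) unfolding safe_deletion_def
proof (elim disjE bexE conjE)
  fix u assume "(V', E') = (fst (V, E) - {u}, induced (snd (V, E)) (fst (V, E) - {u}))"
  then show ?thesis
    using vertex_deletion_reflects_consistency[OF assms(1)] D by simp
next
  fix e f assume "e \<in> snd (V, E)" "f \<in> snd (V, E) - {e}" "e \<subseteq> f"
    and "(V', E') = (fst (V, E), snd (V, E) - {e})"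
  then show ?thesis
    using covered_edge_deletion_reflects_consistency[OF assms(1)] D by simp
qed

lemma safe_deletions_reflect_consistency:
  assumes "safe_deletion\<^sup>*\<^sup>* (V, E) (V', E')" "hypergraph V E" "collection_over E' D"
  shows "\<exists>D'. collection_over E D' \<and> equiconsistent E D' E' D"
  using assms
proof (induction rule: converse_rtranclp_induct2)
  case refl
  then show ?case unfolding equiconsistent_def by blast
next
  case (step V E V1 E1)
  then have "hypergraph V1 E1" by (blast intro: hypergraph_safe_deletion)
  with step obtain D1 where "collection_over E1 D1" "equiconsistent E1 D1 E' D" by blast
  moreover from this(1) obtain D' where "collection_over E D'" "equiconsistent E D' E1 D1"
    using safe_deletion_reflects_consistency step by blast
  ultimately show ?case unfolding equiconsistent_def by auto
qed

theorem lemma8: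
  fixes V0 V1 :: "'a set" and E0 E1 :: "'a set set"
    and D0 :: "'a set \<Rightarrow> ('a \<rightharpoonup> 'v) \<Rightarrow> 'k::comm_monoid_add"
  assumes "positive_monoid TYPE('k)"
    and "hypergraph V1 E1"
    and "safe_deletion\<^sup>*\<^sup>* (V1, E1) (V0, E0)"
    and "collection_over E0 D0"
  shows "\<exists>D1 :: 'a set \<Rightarrow> ('a \<rightharpoonup> 'v) \<Rightarrow> 'k. collection_over E1 D1 \<and>
           (\<forall>k::nat. k \<ge> 1 \<longrightarrow> (kwise_consistent k E0 D0 \<longleftrightarrow> kwise_consistent k E1 D1))"
proof -
  obtain D1 where "collection_over E1 D1" "equiconsistent E1 D1 E0 D0"
    using safe_deletions_reflect_consistency assms(2-4) by blast
  then show ?thesis unfolding equiconsistent_def by auto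
qed

end
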